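(* Let $k$ be a field, $M$ a regular matroid of rank $r$ on ground set $E=\{e_1,\ldots,e_n\}$ ordered by $e_1<\cdots<e_n$, with basis $B=\{e_{n-r+1},\ldots,e_n\}$, and let $\Theta^B=\{\theta_{e_j}: e_j\in B\}$ with $\theta_{e_j}=\sum_{e_i\in\mathrm{coc}(B,e_j)}a^*_{ji}x_i$ built from an admissible signed fundamental cocircuit incidence matrix $(a^*_{ji})$. For each circuit $C$ let $p_C\in k[x_1,\ldots,x_{n-r}]$ be the polynomial obtained from $\prod_{e_j\in\overline{C}}x_j$ by substituting, for each $j\ge n-r+1$, $x_j=-(a^*_{jj})^{-1}\sum_{e_i\in\mathrm{coc}(B,e_j),\,i\neq j}a^*_{ji}x_i$, and let $J(\Delta_{\mathrm{BC}}(M))=\langle p_C : C \text{ a circuit of } M\rangle\subseteq k[x_1,\ldots,x_{n-r}]$. Then, identifying $k[x_1,\ldots,x_n]/(\Theta^B)$ with $k[x_1,\ldots,x_{n-r}]$ via this substitution, $I_{\Delta_{\mathrm{BC}}(M)}+(\Theta^B)$ corresponds to $J(\Delta_{\mathrm{BC}}(M))$; in particular $$k[\Delta_{\mathrm{BC}}(M)]/(\Theta^B)\cong k[x_1,\ldots,x_{n-r}]/J(\Delta_{\mathrm{BC}}(M)).$$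
   Context: $\mathrm{coc}(B,b)$ for $b\in B$ is the unique cocircuit of $M$ contained in $(E\setminus B)\cup\{b\}$ and containing $b$; for $j\ge n-r+1$ one has $\mathrm{coc}(B,e_j)\setminus\{e_j\}\subseteq\{e_1,\ldots,e_{n-r}\}$. The fundamental cocircuit incidence matrix has rows indexed by the fundamental cocircuits $\mathrm{coc}(B,e_j)$, columns by $e_1,\ldots,e_n$, entry $1$ if $e_i\in\mathrm{coc}(B,e_j)$, else $0$. A signing replaces some $1$'s by $-1$; it is admissible over $k$ if it is the restriction to these rows of a signing of the full cocircuit incidence matrix (rows = all cocircuits) for which some signing of the circuit incidence matrix (rows = all circuits) satisfies $\widetilde{\mathcal{A}}_M(\mathcal{C})\widetilde{\mathcal{A}}_M(\mathcal{C}^* )^T=0$ over $k$. For a circuit $C$, $\overline{C}=C\setminus\{\min C\}$ is its broken circuit; $\Delta_{\mathrm{BC}}(M)$ is the complex of sets containing no broken circuit, and its Stanley–Reisner ideal is $I_{\Delta_{\mathrm{BC}}(M)}=\langle\prod_{e_i\in\overline{C}}x_i : C\text{ a circuit}\rangle\subseteq k[x_1,\ldots,x_n]$. *)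

theory Defs
  imports Complex_Main "HOL-Library.Poly_Mapping" "HOL-Combinatorics.Permutations"
begin

type_synonym 'k mpoly = "(nat \<Rightarrow>\<^sub>0 nat) \<Rightarrow>\<^sub>0 'k"

definition Const :: "'k::comm_ring_1 \<Rightarrow> 'k mpoly" where
  "Const c = Poly_Mapping.single 0 c"

definition Var :: "nat \<Rightarrow> 'k::comm_ring_1 mpoly" where
  "Var i = Poly_Mapping.single (Poly_Mapping.single i 1) 1"

definition polys_in :: "nat set \<Rightarrow> 'k::comm_ring_1 mpoly set" where
  "polys_in V = {p. \<forall>m\<in>Poly_Mapping.keys p. Poly_Mapping.keys m \<subseteq> V}"

definition peval :: "(nat \<Rightarrow> 'k::comm_ring_1 mpoly) \<Rightarrow> 'k mpoly \<Rightarrow> 'k mpoly" where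
  "peval f p = (\<Sum>m\<in>Poly_Mapping.keys p. Const (Poly_Mapping.lookup p m) * (\<Prod>i\<in>Poly_Mapping.keys m. f i ^ Poly_Mapping.lookup m i))"

definition ideal_in :: "'a::comm_ring_1 set \<Rightarrow> 'a set \<Rightarrow> 'a set" where
  "ideal_in R S = {\<Sum>g\<in>F. c g * g | F c. finite F \<and> F \<subseteq> S \<and> (\<forall>g\<in>F. c g \<in> R)}"

definition indep :: "nat set set \<Rightarrow> nat set \<Rightarrow> nat set \<Rightarrow> bool" where
  "indep \<C> E X \<longleftrightarrow> X \<subseteq> E \<and> (\<forall>C\<in>\<C>. \<not> C \<subseteq> X)"

definition is_basis :: "nat set set \<Rightarrow> nat set \<Rightarrow> nat set \<Rightarrow> bool" where
  "is_basis \<C> E B \<longleftrightarrow> indep \<C> E B \<and> (\<forall>X. indep \<C> E X \<longrightarrow> B \<subseteq> X \<longrightarrow> X = B)"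

definition cocircuits :: "nat set set \<Rightarrow> nat set \<Rightarrow> nat set set" where
  "cocircuits \<C> E = {D. D \<subseteq> E \<and> (\<forall>B. is_basis \<C> E B \<longrightarrow> D \<inter> B \<noteq> {}) \<and>
     (\<forall>D'. D' \<subset> D \<longrightarrow> (\<exists>B. is_basis \<C> E B \<and> D' \<inter> B = {}))}"

definition fund_coc :: "nat set set \<Rightarrow> nat set \<Rightarrow> nat set \<Rightarrow> nat \<Rightarrow> nat set" where
  "fund_coc \<C> E B b = (THE D. D \<in> cocircuits \<C> E \<and> D \<subseteq> (E - B) \<union> {b} \<and> b \<in> D)"

definition det_fn :: "nat \<Rightarrow> (nat \<Rightarrow> nat \<Rightarrow> int) \<Rightarrow> int" where
  "det_fn k M = (\<Sum>p | p permutes {..<k}. sign p * (\<Prod>i<k. M i (p i)))"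

definition totally_unimodular :: "nat \<Rightarrow> nat \<Rightarrow> (nat \<Rightarrow> nat \<Rightarrow> int) \<Rightarrow> bool" where
  "totally_unimodular m n A \<longleftrightarrow>
    (\<forall>k \<rho> \<gamma>. inj_on \<rho> {..<k} \<and> \<rho> ` {..<k} \<subseteq> {..<m} \<and>
              inj_on \<gamma> {..<k} \<and> \<gamma> ` {..<k} \<subseteq> {1..n} \<longrightarrow>
              det_fn k (\<lambda>i j. A (\<rho> i) (\<gamma> j)) \<in> {-1, 0, 1})"

definition col_dependent :: "nat \<Rightarrow> (nat \<Rightarrow> nat \<Rightarrow> int) \<Rightarrow> nat set \<Rightarrow> bool" where
  "col_dependent m A D \<longleftrightarrow> (\<exists>x :: nat \<Rightarrow> real. (\<exists>i\<in>D. x i \<noteq> 0) \<and>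
      (\<forall>r<m. (\<Sum>i\<in>D. of_int (A r i) * x i) = 0))"

definition col_circuits :: "nat \<Rightarrow> nat \<Rightarrow> (nat \<Rightarrow> nat \<Rightarrow> int) \<Rightarrow> nat set set" where
  "col_circuits m n A = {C. C \<subseteq> {1..n} \<and> col_dependent m A C \<and>
      (\<forall>C'. C' \<subset> C \<longrightarrow> \<not> col_dependent m A C')}"

definition regular_matroid :: "nat \<Rightarrow> nat set set \<Rightarrow> bool" where
  "regular_matroid n \<C> \<longleftrightarrow> (\<exists>m A. totally_unimodular m n A \<and> \<C> = col_circuits m n A)"

definition is_signing :: "nat set set \<Rightarrow> nat set \<Rightarrow> (nat set \<Rightarrow> nat \<Rightarrow> 'k::comm_ring_1) \<Rightarrow> bool" where
  "is_signing \<X> E s \<longleftrightarrow> (\<forall>X\<in>\<X>. \<forall>i\<in>E.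
      (i \<in> X \<longrightarrow> s X i = 1 \<or> s X i = -1) \<and> (i \<notin> X \<longrightarrow> s X i = 0))"

text \<open>a j i is the (signed) entry of row coc(B,e_j), column e_i.\<close>
definition admissible :: "nat set set \<Rightarrow> nat set \<Rightarrow> nat set \<Rightarrow> (nat \<Rightarrow> nat \<Rightarrow> 'k::field) \<Rightarrow> bool" where
  "admissible \<C> E B a \<longleftrightarrow> (\<exists>\<tau> \<sigma>. is_signing (cocircuits \<C> E) E \<tau> \<and> is_signing \<C> E \<sigma> \<and>
      (\<forall>C\<in>\<C>. \<forall>D\<in>cocircuits \<C> E. (\<Sum>i\<in>E. \<sigma> C i * \<tau> D i) = 0) \<and>
      (\<forall>j\<in>B. \<forall>i\<in>E. a j i = \<tau> (fund_coc \<C> E B j) i))"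

definition theta :: "nat set set \<Rightarrow> nat set \<Rightarrow> nat set \<Rightarrow> (nat \<Rightarrow> nat \<Rightarrow> 'k::field) \<Rightarrow> nat \<Rightarrow> 'k mpoly" where
  "theta \<C> E B a j = (\<Sum>i\<in>fund_coc \<C> E B j. Const (a j i) * Var i)"

definition subst_var :: "nat \<Rightarrow> nat \<Rightarrow> nat set set \<Rightarrow> (nat \<Rightarrow> nat \<Rightarrow> 'k::field) \<Rightarrow> nat \<Rightarrow> 'k mpoly" where
  "subst_var n r \<C> a j = (if j \<le> n - r then Var j else
     - (Const (inverse (a j j)) * (\<Sum>i\<in>fund_coc \<C> {1..n} {n-r+1..n} j - {j}. Const (a j i) * Var i)))"

text \<open>Broken circuit monomial (order e_1 < ... < e_n, i.e. numerical order).\<close>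
definition bc_monomial :: "nat set \<Rightarrow> 'k::comm_ring_1 mpoly" where
  "bc_monomial C = (\<Prod>j\<in>C - {Min C}. Var j)"

end

theory Submission
  imports Defs "HOL-Library.Function_Algebras"
begin

text \<open>
  For \<open>e\<^sub>j \<in> B\<close> the fundamental cocircuit \<open>coc(B,e\<^sub>j)\<close> meets \<open>B\<close> only in \<open>e\<^sub>j\<close>, and the
  diagonal entry \<open>a\<^sup>*\<^sub>j\<^sub>j\<close> is a sign, so \<open>\<theta>\<^sub>j\<close> is a unit multiple of \<open>x\<^sub>j - f\<^sub>j\<close>, where \<open>f\<^sub>j\<close>
  is the substituted value, a linear form in the variables outside \<open>B\<close>. The substitution is
  therefore a retraction of \<open>k[x\<^sub>1, \<dots>, x\<^sub>n]\<close> onto the subring in the first \<open>n - r\<close> variables,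
  and every polynomial differs from its image by an element of the ideal generated by the
  \<open>x\<^sub>j - f\<^sub>j\<close>, i.e. by \<open>\<Theta>\<^sup>B\<close>; so \<open>(\<Theta>\<^sup>B)\<close> is the kernel. A surjective ring map with
  kernel \<open>(\<Theta>\<^sup>B)\<close> maps \<open>I + (\<Theta>\<^sup>B)\<close> onto the ideal generated by the images of the
  generators of \<open>I\<close>, which is \<open>J\<close>, and \<open>I + (\<Theta>\<^sup>B)\<close> is the full preimage of \<open>J\<close>.
  Fundamental cocircuits exist by the basis exchange property, which regular matroids
  inherit from linear algebra over the reals.
\<close>

section \<open>Substitution of polynomials\<close>

definition eval_monomial :: "(nat \<Rightarrow> 'k::comm_ring_1 mpoly) \<Rightarrow> (nat \<Rightarrow>\<^sub>0 nat) \<Rightarrow> 'k mpoly" where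
  "eval_monomial f m = (\<Prod>i\<in>Poly_Mapping.keys m. f i ^ Poly_Mapping.lookup m i)"

lemma peval_eval_monomial:
  "peval f p = (\<Sum>m\<in>Poly_Mapping.keys p. Const (Poly_Mapping.lookup p m) * eval_monomial f m)"
  by (simp add: peval_def eval_monomial_def)

lemma keys_add_monomials:
  "Poly_Mapping.keys (m1 + m2) = Poly_Mapping.keys m1 \<union> Poly_Mapping.keys (m2 :: nat \<Rightarrow>\<^sub>0 nat)"
  by (auto simp: in_keys_iff lookup_add)

lemma eval_monomial_superset:
  assumes "finite S" "Poly_Mapping.keys m \<subseteq> S"
  shows "eval_monomial f m = (\<Prod>i\<in>S. f i ^ Poly_Mapping.lookup m i)"
  unfolding eval_monomial_def
  by (rule prod.mono_neutral_left) (use assms in \<open>auto simp: in_keys_iff\<close>)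

lemma eval_monomial_add: "eval_monomial f (m1 + m2) = eval_monomial f m1 * eval_monomial f m2"
proof -
  let ?S = "Poly_Mapping.keys m1 \<union> Poly_Mapping.keys m2"
  have "eval_monomial f (m1 + m2) = (\<Prod>i\<in>?S. f i ^ Poly_Mapping.lookup (m1 + m2) i)"
    by (rule eval_monomial_superset) (auto simp: keys_add_monomials)
  also have "\<dots> = (\<Prod>i\<in>?S. f i ^ Poly_Mapping.lookup m1 i) * (\<Prod>i\<in>?S. f i ^ Poly_Mapping.lookup m2 i)"
    by (simp add: lookup_add power_add prod.distrib)
  also have "\<dots> = eval_monomial f m1 * eval_monomial f m2"
    by (simp add: eval_monomial_superset[where S = ?S])
  finally show ?thesis .
qed

lemma Const_0 [simp]: "Const 0 = 0" by (simp add: Const_def)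
lemma Const_1 [simp]: "Const 1 = 1" by (simp add: Const_def)
lemma Const_add: "Const (a + b) = Const a + Const b" by (simp add: Const_def single_add)
lemma Const_mult: "Const (a * b) = Const a * Const b" by (simp add: Const_def mult_single)

lemma peval_superset:
  assumes "finite S" "Poly_Mapping.keys p \<subseteq> S"
  shows "peval f p = (\<Sum>m\<in>S. Const (Poly_Mapping.lookup p m) * eval_monomial f m)"
  unfolding peval_eval_monomial
  by (rule sum.mono_neutral_left) (use assms in \<open>auto simp: in_keys_iff\<close>)

lemma peval_add: "peval f (p + q) = peval f p + peval f q"
proof -
  let ?S = "Poly_Mapping.keys p \<union> Poly_Mapping.keys q"
  have "peval f (p + q) = (\<Sum>m\<in>?S. Const (Poly_Mapping.lookup (p + q) m) * eval_monomial f m)"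
    by (rule peval_superset) (use keys_add[of p q] in auto)
  also have "\<dots> = (\<Sum>m\<in>?S. Const (Poly_Mapping.lookup p m) * eval_monomial f m)
                + (\<Sum>m\<in>?S. Const (Poly_Mapping.lookup q m) * eval_monomial f m)"
    by (simp add: lookup_add Const_add distrib_right sum.distrib)
  also have "\<dots> = peval f p + peval f q"
    by (simp add: peval_superset[where S = ?S])
  finally show ?thesis .
qed

lemma peval_0 [simp]: "peval f 0 = 0"
  by (simp add: peval_def)

lemma peval_sum: "peval f (sum g A) = (\<Sum>x\<in>A. peval f (g x))"
  by (induction A rule: infinite_finite_induct) (auto simp: peval_add)

lemma peval_single: "peval f (Poly_Mapping.single m c) = Const c * eval_monomial f m"
  by (subst peval_superset[of "{m}"]) auto

lemma sum_single_lookup: "(\<Sum>m\<in>Poly_Mapping.keys p. Poly_Mapping.single m (Poly_Mapping.lookup p m)) = p"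
  by (rule poly_mapping_eqI)
    (auto simp: lookup_sum lookup_single when_def in_keys_iff sum.delta[OF finite_keys])

lemma peval_mult: "peval f (p * q) = peval f p * peval f q"
proof -
  have "p * q = (\<Sum>m\<in>Poly_Mapping.keys p. Poly_Mapping.single m (Poly_Mapping.lookup p m)) *
      (\<Sum>m\<in>Poly_Mapping.keys q. Poly_Mapping.single m (Poly_Mapping.lookup q m))"
    by (simp only: sum_single_lookup)
  also have "\<dots> = (\<Sum>m\<in>Poly_Mapping.keys p. \<Sum>m'\<in>Poly_Mapping.keys q.
       Poly_Mapping.single (m + m') (Poly_Mapping.lookup p m * Poly_Mapping.lookup q m'))"
    by (simp add: sum_product mult_single)
  finally have "peval f (p * q) = (\<Sum>m\<in>Poly_Mapping.keys p. \<Sum>m'\<in>Poly_Mapping.keys q.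
       (Const (Poly_Mapping.lookup p m) * eval_monomial f m) * (Const (Poly_Mapping.lookup q m') * eval_monomial f m'))"
    by (simp add: peval_sum peval_single eval_monomial_add Const_mult mult_ac)
  also have "\<dots> = peval f p * peval f q"
    by (simp add: peval_eval_monomial sum_product)
  finally show ?thesis .
qed

lemma peval_uminus: "peval f (- p) = - peval f p"
  using peval_add[of f p "- p"] by (simp add: add_eq_0_iff2)

lemma peval_diff: "peval f (p - q) = peval f p - peval f q"
  using peval_add[of f p "- q"] by (simp add: peval_uminus)

lemma peval_Const [simp]: "peval f (Const c) = Const c"
  using peval_single[of f 0 c] by (simp add: Const_def eval_monomial_def)

lemma peval_Var [simp]: "peval f (Var i) = f i"
  unfolding Var_def by (simp add: peval_single eval_monomial_def)

lemma peval_cong: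
  assumes "\<And>m i. m \<in> Poly_Mapping.keys p \<Longrightarrow> i \<in> Poly_Mapping.keys m \<Longrightarrow> f i = g i"
  shows "peval f p = peval g p"
  unfolding peval_eval_monomial eval_monomial_def
  by (intro sum.cong refl arg_cong2[where f=times] prod.cong) (auto simp: assms)

lemma Var_power: "Var i ^ k = Poly_Mapping.single (Poly_Mapping.single i k) 1"
  by (induction k) (auto simp: Var_def mult_single single_add[symmetric])

lemma prod_single_one:
  "(\<Prod>i\<in>A. Poly_Mapping.single (g i) (1 :: 'k::comm_ring_1)) = Poly_Mapping.single (\<Sum>i\<in>A. g i) 1"
  by (induction A rule: infinite_finite_induct) (auto simp: mult_single)

lemma peval_Var_id: "peval Var p = (p :: 'k::comm_ring_1 mpoly)"
proof -
  have "eval_monomial (Var :: nat \<Rightarrow> 'k mpoly) m = Poly_Mapping.single m 1" for m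
    by (simp add: eval_monomial_def Var_power prod_single_one sum_single_lookup)
  then show ?thesis
    by (simp add: peval_eval_monomial Const_def mult_single sum_single_lookup)
qed

lemma polys_in_0 [simp]: "0 \<in> polys_in V"
  by (simp add: polys_in_def)

lemma polys_in_add: "p \<in> polys_in V \<Longrightarrow> q \<in> polys_in V \<Longrightarrow> p + q \<in> polys_in V"
  using keys_add[of p q] by (auto simp: polys_in_def)

lemma polys_in_mult: "p \<in> polys_in V \<Longrightarrow> q \<in> polys_in V \<Longrightarrow> p * q \<in> polys_in V"
  using keys_mult[of p q] by (fastforce simp: polys_in_def keys_add_monomials)

lemma polys_in_uminus: "p \<in> polys_in V \<Longrightarrow> - p \<in> polys_in V"
  by (auto simp: polys_in_def in_keys_iff)

lemma polys_in_diff: "p \<in> polys_in V \<Longrightarrow> q \<in> polys_in V \<Longrightarrow> p - q \<in> polys_in V"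
  by (metis diff_conv_add_uminus polys_in_add polys_in_uminus)

lemma polys_in_Const [simp]: "Const c \<in> polys_in V"
  by (simp add: polys_in_def Const_def)

lemma polys_in_Var: "i \<in> V \<Longrightarrow> Var i \<in> polys_in V"
  by (simp add: polys_in_def Var_def)

lemma polys_in_sum: "(\<And>x. x \<in> A \<Longrightarrow> g x \<in> polys_in V) \<Longrightarrow> sum g A \<in> polys_in V"
  by (induction A rule: infinite_finite_induct) (auto intro: polys_in_add)

lemma polys_in_prod: "(\<And>x. x \<in> A \<Longrightarrow> g x \<in> polys_in V) \<Longrightarrow> prod g A \<in> polys_in V"
  by (induction A rule: infinite_finite_induct)
    (auto intro: polys_in_mult simp: polys_in_Const[of 1, simplified])

lemma polys_in_power: "p \<in> polys_in V \<Longrightarrow> p ^ k \<in> polys_in V"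
  by (induction k) (auto intro: polys_in_mult simp: polys_in_Const[of 1, simplified])

lemma polys_in_mono: "V \<subseteq> W \<Longrightarrow> polys_in V \<subseteq> polys_in W"
  by (auto simp: polys_in_def)

lemma peval_polys_in:
  assumes "\<And>i. i \<in> V \<Longrightarrow> f i \<in> polys_in W" "p \<in> polys_in V"
  shows "peval f p \<in> polys_in W"
  using assms unfolding peval_def
  by (intro polys_in_sum polys_in_mult polys_in_Const polys_in_prod polys_in_power)
    (auto simp: polys_in_def)

lemma peval_id_on_polys_in:
  assumes "\<And>i. i \<in> V \<Longrightarrow> f i = Var i" "p \<in> polys_in V"
  shows "peval f p = p"
proof -
  have "peval f p = peval Var p"
    by (rule peval_cong) (use assms in \<open>auto simp: polys_in_def\<close>)
  then show ?thesis by (simp add: peval_Var_id)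
qed

lemma polys_in_induct [consumes 1, case_names Const Var add mult]:
  assumes "p \<in> polys_in V"
    and Const: "\<And>c. P (Const c)" and Var: "\<And>i. i \<in> V \<Longrightarrow> P (Var i)"
    and add: "\<And>p q. P p \<Longrightarrow> P q \<Longrightarrow> P (p + q)" and mult: "\<And>p q. P p \<Longrightarrow> P q \<Longrightarrow> P (p * q)"
  shows "P p"
proof -
  have P0: "P 0" and P1: "P 1"
    using Const[of 0] Const[of 1] by simp_all
  have sum: "P (sum g A)" if "\<And>x. x \<in> A \<Longrightarrow> P (g x)" for g and A :: "'b set"
    using that by (induction A rule: infinite_finite_induct) (auto intro: add P0)
  have prod: "P (prod g A)" if "\<And>x. x \<in> A \<Longrightarrow> P (g x)" for g and A :: "'b set"
    using that by (induction A rule: infinite_finite_induct) (auto intro: mult P1)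
  have power: "P (q ^ k)" if "P q" for q k
    using that by (induction k) (auto intro: mult P1)
  have "P (peval Var p)"
    unfolding peval_def
    by (intro sum mult Const prod power Var) (use assms(1) in \<open>auto simp: polys_in_def\<close>)
  then show ?thesis by (simp add: peval_Var_id)
qed

lemma ideal_in_0: "0 \<in> ideal_in R S"
  unfolding ideal_in_def by (auto intro!: exI[of _ "{}"])

lemma ideal_in_gen: "c \<in> R \<Longrightarrow> s \<in> S \<Longrightarrow> c * s \<in> ideal_in R S"
  unfolding ideal_in_def mem_Collect_eq by (intro exI[of _ "{s}"] exI[of _ "\<lambda>_. c"]) simp

lemma ideal_in_add:
  assumes "x \<in> ideal_in (polys_in V) S" "y \<in> ideal_in (polys_in V) S"
  shows "x + y \<in> ideal_in (polys_in V) S"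
proof -
  obtain F1 c1 where 1: "x = (\<Sum>g\<in>F1. c1 g * g)" "finite F1" "F1 \<subseteq> S" "\<forall>g\<in>F1. c1 g \<in> polys_in V"
    using assms(1) by (auto simp: ideal_in_def)
  obtain F2 c2 where 2: "y = (\<Sum>g\<in>F2. c2 g * g)" "finite F2" "F2 \<subseteq> S" "\<forall>g\<in>F2. c2 g \<in> polys_in V"
    using assms(2) by (auto simp: ideal_in_def)
  define c where "c g = (if g \<in> F1 then c1 g else 0) + (if g \<in> F2 then c2 g else 0)" for g
  have "(\<Sum>g\<in>F1 \<union> F2. c g * g)
      = (\<Sum>g\<in>F1 \<union> F2. if g \<in> F1 then c1 g * g else 0) + (\<Sum>g\<in>F1 \<union> F2. if g \<in> F2 then c2 g * g else 0)"
    unfolding sum.distrib[symmetric] by (rule sum.cong) (auto simp: c_def distrib_right)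
  also have "\<dots> = x + y"
    using 1 2 by (simp add: sum.inter_restrict[symmetric] Int_absorb1)
  finally have "x + y = (\<Sum>g\<in>F1 \<union> F2. c g * g)" by simp
  moreover have "\<forall>g\<in>F1 \<union> F2. c g \<in> polys_in V"
    using 1 2 by (auto simp: c_def intro: polys_in_add)
  ultimately show ?thesis
    using 1 2 unfolding ideal_in_def by blast
qed

lemma ideal_in_mult:
  assumes "r \<in> polys_in V" "x \<in> ideal_in (polys_in V) S"
  shows "r * x \<in> ideal_in (polys_in V) S"
proof -
  obtain F c where 1: "x = (\<Sum>g\<in>F. c g * g)" "finite F" "F \<subseteq> S" "\<forall>g\<in>F. c g \<in> polys_in V"
    using assms(2) by (auto simp: ideal_in_def)
  have "r * x = (\<Sum>g\<in>F. (r * c g) * g)"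
    using 1 by (simp add: sum_distrib_left mult.assoc)
  moreover have "\<forall>g\<in>F. r * c g \<in> polys_in V"
    using 1 assms(1) by (auto intro: polys_in_mult)
  ultimately show ?thesis
    using 1 unfolding ideal_in_def mem_Collect_eq by (intro exI[of _ F] exI[of _ "\<lambda>g. r * c g"]) auto
qed

lemma ideal_in_subset: "S \<subseteq> polys_in V \<Longrightarrow> ideal_in (polys_in V) S \<subseteq> polys_in V"
  by (auto simp: ideal_in_def intro!: polys_in_sum polys_in_mult)

lemma ideal_in_mono: "S \<subseteq> S' \<Longrightarrow> ideal_in R S \<subseteq> ideal_in R S'"
  unfolding ideal_in_def by blast

lemma ideal_in_induct [consumes 1, case_names gen 0 add]:
  assumes "x \<in> ideal_in R S"
    and gen: "\<And>c g. c \<in> R \<Longrightarrow> g \<in> S \<Longrightarrow> P (c * g)"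
    and "P 0" and "\<And>x y. P x \<Longrightarrow> P y \<Longrightarrow> P (x + y)"
  shows "P x"
proof -
  obtain F c where F: "x = (\<Sum>g\<in>F. c g * g)" "finite F" "F \<subseteq> S" "\<forall>g\<in>F. c g \<in> R"
    using assms(1) by (auto simp: ideal_in_def)
  have "P (\<Sum>g\<in>F'. c g * g)" if "F' \<subseteq> F" for F'
    using finite_subset[OF that F(2)] that
    by (induction F' rule: finite_induct) (use F assms in auto)
  then show ?thesis using F by auto
qed

section \<open>Eliminating variables by substitution\<close>

locale variable_retraction =
  fixes V W :: "nat set" and f :: "nat \<Rightarrow> 'k::comm_ring_1 mpoly"
  assumes subset: "W \<subseteq> V"
    and fixes_vars: "\<And>i. i \<in> W \<Longrightarrow> f i = Var i"
    and maps_into: "\<And>i. i \<in> V \<Longrightarrow> f i \<in> polys_in W"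
begin

lemma peval_in_polys_in: "p \<in> polys_in V \<Longrightarrow> peval f p \<in> polys_in W"
  by (rule peval_polys_in[OF maps_into])

lemma peval_fixes: "p \<in> polys_in W \<Longrightarrow> peval f p = p"
  by (rule peval_id_on_polys_in[OF fixes_vars])

lemma peval_image: "peval f ` polys_in V = polys_in W"
proof
  show "peval f ` polys_in V \<subseteq> polys_in W"
    using peval_in_polys_in by blast
  show "polys_in W \<subseteq> peval f ` polys_in V"
  proof
    fix p :: "'k mpoly" assume "p \<in> polys_in W"
    then show "p \<in> peval f ` polys_in V"
      using peval_fixes polys_in_mono[OF subset] by (intro image_eqI[of _ _ p]) auto
  qed
qed

lemma diff_peval_in_ideal:
  assumes elim: "\<And>j. j \<in> V - W \<Longrightarrow> Var j - f j \<in> ideal_in (polys_in V) \<Theta>"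
    and p: "p \<in> polys_in V"
  shows "p - peval f p \<in> ideal_in (polys_in V) \<Theta>"
proof -
  have "p \<in> polys_in V \<and> p - peval f p \<in> ideal_in (polys_in V) \<Theta>"
    using p
  proof (induction rule: polys_in_induct)
    case (Const c)
    then show ?case by (simp add: ideal_in_0)
  next
    case (Var i)
    have "Var i - f i \<in> ideal_in (polys_in V) \<Theta>"
      using elim[of i] fixes_vars[of i] Var by (cases "i \<in> W") (simp_all add: ideal_in_0)
    then show ?case
      using Var by (simp add: polys_in_Var)
  next
    case (add p q)
    have "p + q - peval f (p + q) = (p - peval f p) + (q - peval f q)"
      by (simp add: peval_add)
    also have "\<dots> \<in> ideal_in (polys_in V) \<Theta>"
      using add by (simp add: ideal_in_add)
    finally show ?case
      using add by (simp add: polys_in_add)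
  next
    case (mult p q)
    have "p * q - peval f (p * q) = q * (p - peval f p) + peval f p * (q - peval f q)"
      by (simp add: peval_mult algebra_simps)
    moreover have "peval f p \<in> polys_in V"
      using mult peval_in_polys_in polys_in_mono[OF subset] by blast
    ultimately show ?case
      using mult by (simp add: ideal_in_add ideal_in_mult polys_in_mult)
  qed
  then show ?thesis ..
qed

end

locale variable_elimination = variable_retraction V W f
  for V W :: "nat set" and f :: "nat \<Rightarrow> 'k::comm_ring_1 mpoly" +
  fixes \<Theta> :: "'k mpoly set"
  assumes generators_polys_in: "\<Theta> \<subseteq> polys_in V"
    and peval_generators: "\<And>g. g \<in> \<Theta> \<Longrightarrow> peval f g = 0"
    and eliminated_in_ideal: "\<And>j. j \<in> V - W \<Longrightarrow> Var j - f j \<in> ideal_in (polys_in V) \<Theta>"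
begin

lemma peval_eq_0_iff:
  assumes "p \<in> polys_in V"
  shows "peval f p = 0 \<longleftrightarrow> p \<in> ideal_in (polys_in V) \<Theta>"
proof
  assume "peval f p = 0"
  then show "p \<in> ideal_in (polys_in V) \<Theta>"
    using diff_peval_in_ideal[OF eliminated_in_ideal assms] by simp
next
  assume "p \<in> ideal_in (polys_in V) \<Theta>"
  then show "peval f p = 0"
    by (induction rule: ideal_in_induct) (simp_all add: peval_mult peval_add peval_generators)
qed

lemma peval_image_ideal:
  "peval f ` ideal_in (polys_in V) (G \<union> \<Theta>) = ideal_in (polys_in W) (peval f ` G)"
proof
  show "peval f ` ideal_in (polys_in V) (G \<union> \<Theta>) \<subseteq> ideal_in (polys_in W) (peval f ` G)"
  proof clarify
    fix x assume "x \<in> ideal_in (polys_in V) (G \<union> \<Theta>)"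
    then show "peval f x \<in> ideal_in (polys_in W) (peval f ` G)"
    proof (induction rule: ideal_in_induct)
      case (gen c g)
      show ?case
      proof (cases "g \<in> \<Theta>")
        case True
        then show ?thesis
          by (simp add: peval_mult peval_generators ideal_in_0)
      next
        case False
        then have "peval f g \<in> peval f ` G"
          using gen by blast
        then show ?thesis
          using gen by (simp add: peval_mult ideal_in_gen peval_in_polys_in)
      qed
    qed (simp_all add: ideal_in_0 peval_add ideal_in_add)
  qed
  show "ideal_in (polys_in W) (peval f ` G) \<subseteq> peval f ` ideal_in (polys_in V) (G \<union> \<Theta>)"
  proof
    fix y assume "y \<in> ideal_in (polys_in W) (peval f ` G)"
    then show "y \<in> peval f ` ideal_in (polys_in V) (G \<union> \<Theta>)"
    proof (induction rule: ideal_in_induct)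
      case (gen c g)
      then obtain g' where g': "g' \<in> G" "g = peval f g'"
        by blast
      have "c * g' \<in> ideal_in (polys_in V) (G \<union> \<Theta>)"
        using gen g' polys_in_mono[OF subset] by (auto intro: ideal_in_gen)
      moreover have "peval f (c * g') = c * g"
        using gen g' by (simp add: peval_mult peval_fixes)
      ultimately show ?case
        by (intro rev_image_eqI[of "c * g'"]) simp_all
    next
      case 0
      show ?case
        by (rule rev_image_eqI[OF ideal_in_0]) simp
    next
      case (add x y)
      then obtain x' y' where "x' \<in> ideal_in (polys_in V) (G \<union> \<Theta>)" "x = peval f x'"
        "y' \<in> ideal_in (polys_in V) (G \<union> \<Theta>)" "y = peval f y'"
        by blast
      then show ?case
        by (intro rev_image_eqI[of "x' + y'"]) (simp_all add: ideal_in_add peval_add)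
    qed
  qed
qed

lemma peval_in_ideal_iff:
  assumes G: "G \<subseteq> polys_in V" and p: "p \<in> polys_in V"
  shows "peval f p \<in> ideal_in (polys_in W) (peval f ` G) \<longleftrightarrow> p \<in> ideal_in (polys_in V) (G \<union> \<Theta>)"
proof
  assume "peval f p \<in> ideal_in (polys_in W) (peval f ` G)"
  then obtain q where q: "q \<in> ideal_in (polys_in V) (G \<union> \<Theta>)" "peval f p = peval f q"
    unfolding peval_image_ideal[symmetric] by blast
  have "q \<in> polys_in V"
    using q(1) ideal_in_subset G generators_polys_in by blast
  then have "p - q \<in> ideal_in (polys_in V) \<Theta>"
    using q(2) p by (simp add: peval_eq_0_iff[symmetric] peval_diff polys_in_diff)
  then have "(p - q) + q \<in> ideal_in (polys_in V) (G \<union> \<Theta>)"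
    using q(1) ideal_in_mono[of \<Theta> "G \<union> \<Theta>"] by (blast intro: ideal_in_add)
  then show "p \<in> ideal_in (polys_in V) (G \<union> \<Theta>)"
    by simp
next
  assume "p \<in> ideal_in (polys_in V) (G \<union> \<Theta>)"
  then show "peval f p \<in> ideal_in (polys_in W) (peval f ` G)"
    unfolding peval_image_ideal[symmetric] by blast
qed

end

section \<open>Fundamental cocircuits\<close>

lemma basis_insert_dependent: "is_basis \<C> E B \<Longrightarrow> e \<notin> B \<Longrightarrow> \<not> indep \<C> E (insert e B)"
  unfolding is_basis_def by blast

locale circuit_matroid =
  fixes \<C> :: "nat set set" and E :: "nat set"
  assumes finite_ground: "finite E"
    and augmentation: "\<And>I J. indep \<C> E I \<Longrightarrow> indep \<C> E J \<Longrightarrow> card I < card J \<Longrightarrow>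
        \<exists>e\<in>J - I. indep \<C> E (insert e I)"
begin

lemma indep_finite: "indep \<C> E X \<Longrightarrow> finite X"
  using finite_ground finite_subset unfolding indep_def by blast

lemma basis_card_le:
  assumes "is_basis \<C> E B" "is_basis \<C> E B'"
  shows "card B \<le> card B'"
  using augmentation[of B' B] basis_insert_dependent[OF assms(2)] assms
  unfolding is_basis_def by (meson DiffD2 not_le)

definition exchangeable :: "nat set \<Rightarrow> nat \<Rightarrow> nat set" where
  "exchangeable B b = {b} \<union> {e \<in> E - B. is_basis \<C> E (insert e (B - {b}))}"

lemma exchange_is_basis:
  assumes B: "is_basis \<C> E B" and b: "b \<in> B"
    and e: "e \<notin> B" "indep \<C> E (insert e (B - {b}))"
  shows "is_basis \<C> E (insert e (B - {b}))"
  unfolding is_basis_def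
proof (intro conjI allI impI)
  show "indep \<C> E (insert e (B - {b}))" by fact
  fix X assume X: "indep \<C> E X" "insert e (B - {b}) \<subseteq> X"
  have finB: "finite B"
    using B indep_finite unfolding is_basis_def by blast
  have "card (insert e (B - {b})) = card B"
    using card_Suc_Diff1[OF finB b] finB e(1) by simp
  show "X = insert e (B - {b})"
  proof (rule ccontr)
    assume "X \<noteq> insert e (B - {b})"
    with X have "card (insert e (B - {b})) < card X"
      by (intro psubset_card_mono indep_finite) auto
    then obtain x where "x \<in> X - B" "indep \<C> E (insert x B)"
      using augmentation[of B X] B X(1) \<open>card (insert e (B - {b})) = card B\<close>
      unfolding is_basis_def by auto
    then show False
      using basis_insert_dependent[OF B] by blast
  qed
qed

lemma exchangeable_meets_basis:
  assumes B: "is_basis \<C> E B" and b: "b \<in> B" and B': "is_basis \<C> E B'"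
  shows "exchangeable B b \<inter> B' \<noteq> {}"
proof
  assume disjoint: "exchangeable B b \<inter> B' = {}"
  have finB: "finite B"
    using B indep_finite unfolding is_basis_def by blast
  have "card B > 0"
    using finB b card_gt_0_iff by blast
  then have "card (B - {b}) < card B'"
    using basis_card_le[OF B B'] finB b by simp
  moreover have "indep \<C> E (B - {b})"
    using B unfolding is_basis_def indep_def by blast
  ultimately obtain e where e: "e \<in> B' - (B - {b})" "indep \<C> E (insert e (B - {b}))"
    using augmentation B' unfolding is_basis_def by blast
  have "b \<notin> B'"
    using disjoint by (auto simp: exchangeable_def)
  then have "e \<notin> B"
    using e by auto
  moreover have "e \<in> E"
    using e(2) unfolding indep_def by blast
  ultimately have "e \<in> exchangeable B b"
    using exchange_is_basis[OF B b _ e(2)] by (auto simp: exchangeable_def)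
  then show False
    using disjoint e by blast
qed

lemma exchangeable_cocircuit:
  assumes B: "is_basis \<C> E B" and b: "b \<in> B"
  shows "exchangeable B b \<in> cocircuits \<C> E"
  unfolding cocircuits_def mem_Collect_eq
proof (intro conjI allI impI)
  show "exchangeable B b \<subseteq> E"
    using B b unfolding is_basis_def indep_def exchangeable_def by blast
  show "exchangeable B b \<inter> B' \<noteq> {}" if "is_basis \<C> E B'" for B'
    using exchangeable_meets_basis[OF B b that] .
  fix D' assume D': "D' \<subset> exchangeable B b"
  then obtain x where x: "x \<in> exchangeable B b" "x \<notin> D'"
    by blast
  \<comment> \<open>the basis avoiding \<open>D'\<close> is \<open>B\<close> itself or the exchange of \<open>b\<close> for \<open>x\<close>\<close>
  show "\<exists>B'. is_basis \<C> E B' \<and> D' \<inter> B' = {}"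
  proof (cases "x = b")
    case True
    then show ?thesis
      using B D' x unfolding exchangeable_def by blast
  next
    case False
    then show ?thesis
      using D' x unfolding exchangeable_def by blast
  qed
qed

lemma fund_coc_eq_exchangeable:
  assumes B: "is_basis \<C> E B" and b: "b \<in> B"
  shows "fund_coc \<C> E B b = exchangeable B b"
  unfolding fund_coc_def
proof (rule the_equality)
  show "exchangeable B b \<in> cocircuits \<C> E \<and> exchangeable B b \<subseteq> E - B \<union> {b} \<and> b \<in> exchangeable B b"
    using exchangeable_cocircuit[OF B b] by (auto simp: exchangeable_def)
  fix D assume D: "D \<in> cocircuits \<C> E \<and> D \<subseteq> E - B \<union> {b} \<and> b \<in> D"
  have "exchangeable B b \<subseteq> D"
  proof
    fix e assume "e \<in> exchangeable B b"
    then have "e = b \<or> is_basis \<C> E (insert e (B - {b}))"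
      by (auto simp: exchangeable_def)
    then show "e \<in> D"
      using D unfolding cocircuits_def by blast
  qed
  moreover have "\<not> exchangeable B b \<subset> D"
    using D exchangeable_meets_basis[OF B b] unfolding cocircuits_def by blast
  ultimately show "D = exchangeable B b"
    by blast
qed

lemma fund_coc_props:
  assumes "is_basis \<C> E B" "b \<in> B"
  shows "fund_coc \<C> E B b \<in> cocircuits \<C> E" "fund_coc \<C> E B b \<subseteq> (E - B) \<union> {b}"
    "b \<in> fund_coc \<C> E B b"
  using assms exchangeable_cocircuit[OF assms]
  by (auto simp: fund_coc_eq_exchangeable exchangeable_def)

lemma admissible_diagonal:
  assumes B: "is_basis \<C> E B" and "admissible \<C> E B a" and j: "j \<in> B"
  shows "a j j = 1 \<or> a j j = -1"
proof -
  obtain \<tau> where \<tau>: "is_signing (cocircuits \<C> E) E \<tau>" "\<forall>j\<in>B. \<forall>i\<in>E. a j i = \<tau> (fund_coc \<C> E B j) i"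
    using assms(2) unfolding admissible_def by blast
  have "j \<in> E"
    using B j unfolding is_basis_def indep_def by blast
  then show ?thesis
    using \<tau> fund_coc_props[OF B j] j unfolding is_signing_def by metis
qed

end

section \<open>Column matroids\<close>

lemma col_dependent_mono:
  assumes "finite X" "C \<subseteq> X" "col_dependent m A C"
  shows "col_dependent m A X"
proof -
  obtain x :: "nat \<Rightarrow> real" where x: "\<exists>i\<in>C. x i \<noteq> 0" "\<forall>r<m. (\<Sum>i\<in>C. of_int (A r i) * x i) = 0"
    using assms(3) by (auto simp: col_dependent_def)
  define y where "y i = (if i \<in> C then x i else 0)" for i
  have "(\<Sum>i\<in>X. of_int (A r i) * y i) = (\<Sum>i\<in>C. of_int (A r i) * x i)" for r
  proof -
    have "(\<Sum>i\<in>X. of_int (A r i) * y i) = (\<Sum>i\<in>X. if i \<in> C then of_int (A r i) * x i else 0)"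
      by (rule sum.cong) (auto simp: y_def)
    also have "\<dots> = (\<Sum>i\<in>C. of_int (A r i) * x i)"
      using assms(1,2) by (simp add: sum.inter_restrict[symmetric] Int_absorb1 Int_absorb2)
    finally show ?thesis .
  qed
  then show ?thesis
    using x assms(2) unfolding col_dependent_def by (intro exI[of _ y]) (auto simp: y_def)
qed

lemma indep_col_circuits_iff:
  "indep (col_circuits m n A) {1..n} X \<longleftrightarrow> X \<subseteq> {1..n} \<and> \<not> col_dependent m A X"
proof
  assume X: "indep (col_circuits m n A) {1..n} X"
  then have XE: "X \<subseteq> {1..n}"
    by (simp add: indep_def)
  then have finX: "finite X"
    by (rule finite_subset) simp
  show "X \<subseteq> {1..n} \<and> \<not> col_dependent m A X"
  proof (intro conjI XE notI)
    assume "col_dependent m A X"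
    \<comment> \<open>a dependent subset of minimal cardinality is a circuit\<close>
    then obtain C where C: "C \<subseteq> X" "col_dependent m A C"
        "\<And>C'. C' \<subseteq> X \<Longrightarrow> col_dependent m A C' \<Longrightarrow> card C \<le> card C'"
      using ex_has_least_nat[of "\<lambda>C. C \<subseteq> X \<and> col_dependent m A C" X card] by blast
    have "C \<in> col_circuits m n A"
      unfolding col_circuits_def mem_Collect_eq
    proof (intro conjI allI impI)
      show "C \<subseteq> {1..n}" "col_dependent m A C"
        using C XE by auto
      fix C' assume "C' \<subset> C"
      then have "card C' < card C"
        using finite_subset[OF C(1) finX] psubset_card_mono by blast
      moreover have "C' \<subseteq> X"
        using C(1) \<open>C' \<subset> C\<close> by blast
      ultimately show "\<not> col_dependent m A C'"
        using C(3)[of C'] by linarith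

    qed
    then show False
      using X C(1) by (auto simp: indep_def)
  qed
next
  assume X: "X \<subseteq> {1..n} \<and> \<not> col_dependent m A X"
  then have finX: "finite X"
    using finite_subset by blast
  show "indep (col_circuits m n A) {1..n} X"
    unfolding indep_def
  proof (intro conjI ballI notI)
    show "X \<subseteq> {1..n}"
      using X by simp
    fix C assume "C \<in> col_circuits m n A" "C \<subseteq> X"
    then show False
      using col_dependent_mono[OF finX, of C m A] X by (simp add: col_circuits_def)
  qed
qed

lemma sum_fun_apply: "(\<Sum>i\<in>I. g i) r = (\<Sum>i\<in>I. g i r)" for g :: "'a \<Rightarrow> nat \<Rightarrow> real"
  by (induction I rule: infinite_finite_induct) auto

context
  fixes m :: nat and A :: "nat \<Rightarrow> nat \<Rightarrow> int"
begin

definition col :: "nat \<Rightarrow> nat \<Rightarrow> real" where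
  "col i = (\<lambda>r. if r < m then of_int (A r i) else 0)"

interpretation V: vector_space "\<lambda>(c::real) (f::nat \<Rightarrow> real). (\<lambda>r. c * f r)"
  by unfold_locales (auto simp: fun_eq_iff algebra_simps)

lemma sum_col:
  "(\<Sum>i\<in>I. (\<lambda>r. x i * col i r)) r = (if r < m then (\<Sum>i\<in>I. of_int (A r i) * x i) else 0)"
  by (auto simp: sum_fun_apply col_def mult.commute)

lemma inj_on_col:
  assumes "finite I" "\<not> col_dependent m A I"
  shows "inj_on col I"
proof
  fix i j assume ij: "i \<in> I" "j \<in> I" "col i = col j"
  show "i = j"
  proof (rule ccontr)
    assume ne: "i \<noteq> j"
    define x where "x k = (if k = i then 1 else if k = j then -1 else (0::real))" for k
    have "(\<Sum>k\<in>I. of_int (A r k) * x k) = 0" if "r < m" for r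
    proof -
      have "(\<Sum>k\<in>I. of_int (A r k) * x k)
          = (\<Sum>k\<in>I. (if k = i then of_int (A r i) else 0) + (if k = j then - of_int (A r j) else 0))"
        by (rule sum.cong) (auto simp: x_def ne)
      also have "\<dots> = of_int (A r i) - of_int (A r j)"
        using assms(1) ij by (simp add: sum.distrib)
      also have "\<dots> = 0"
        using fun_cong[OF ij(3), of r] that by (simp add: col_def)
      finally show ?thesis .
    qed
    then have "col_dependent m A I"
      unfolding col_dependent_def using ij by (intro exI[of _ x]) (auto simp: x_def)
    then show False
      using assms by simp
  qed
qed

lemma independent_cols:
  assumes "finite I" "\<not> col_dependent m A I"
  shows "V.independent (col ` I)"
proof (rule V.independent_if_scalars_zero)
  show "finite (col ` I)"
    using assms by simp
  fix c v assume sum0: "(\<Sum>v\<in>col ` I. (\<lambda>r. c v * v r)) = 0" and v: "v \<in> col ` I"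
  have "(\<Sum>i\<in>I. (\<lambda>r. c (col i) * col i r)) = 0"
    using sum0 sum.reindex[OF inj_on_col[OF assms], of "\<lambda>v. (\<lambda>r. c v * v r)"] by simp
  then have "(\<Sum>i\<in>I. of_int (A r i) * c (col i)) = 0" if "r < m" for r
    using sum_col[of "\<lambda>i. c (col i)" I r] that by simp
  then have "\<forall>i\<in>I. c (col i) = 0"
    using assms(2) unfolding col_dependent_def by (metis (no_types))
  then show "c v = 0"
    using v by auto
qed

lemma col_in_span:
  assumes "\<not> col_dependent m A I" "e \<notin> I" "col_dependent m A (insert e I)" "finite I"
  shows "col e \<in> V.span (col ` I)"
proof -
  obtain x :: "nat \<Rightarrow> real" where x: "\<exists>i\<in>insert e I. x i \<noteq> 0"
      "\<forall>r<m. (\<Sum>i\<in>insert e I. of_int (A r i) * x i) = 0"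
    using assms(3) by (auto simp: col_dependent_def)
  have "x e \<noteq> 0"
  proof
    assume "x e = 0"
    then have "\<exists>i\<in>I. x i \<noteq> 0" "\<forall>r<m. (\<Sum>i\<in>I. of_int (A r i) * x i) = 0"
      using x assms(2,4) by auto
    then have "col_dependent m A I"
      unfolding col_dependent_def by blast
    then show False
      using assms(1) by simp
  qed
  have "col e = (\<Sum>i\<in>I. (\<lambda>r. (- x i / x e) * col i r))"
  proof
    fix r
    have "of_int (A r e) = (\<Sum>i\<in>I. of_int (A r i) * (- x i / x e))" if "r < m"
    proof -
      have "of_int (A r e) * x e + (\<Sum>i\<in>I. of_int (A r i) * x i) = 0"
        using x(2) that assms(2,4) by simp
      then have "of_int (A r e) = - (\<Sum>i\<in>I. of_int (A r i) * x i) / x e"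
        using \<open>x e \<noteq> 0\<close> by (simp add: field_simps)
      then show ?thesis
        by (simp add: sum_divide_distrib sum_negf[symmetric])
    qed
    then show "col e r = (\<Sum>i\<in>I. (\<lambda>r. (- x i / x e) * col i r)) r"
      using sum_col[of "\<lambda>i. - x i / x e" I r] by (simp add: col_def)
  qed
  also have "\<dots> \<in> V.span (col ` I)"
    by (intro V.span_sum V.span_scale V.span_base) auto
  finally show ?thesis .
qed

lemma col_augmentation:
  assumes I: "finite I" "\<not> col_dependent m A I" and J: "finite J" "\<not> col_dependent m A J"
    and less: "card I < card J"
  shows "\<exists>e\<in>J - I. \<not> col_dependent m A (insert e I)"
proof (rule ccontr)
  assume "\<not> ?thesis"
  then have dependent: "col_dependent m A (insert e I)" if "e \<in> J - I" for e
    using that by blast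
  have "col e \<in> V.span (col ` I)" if "e \<in> J" for e
  proof (cases "e \<in> I")
    case True
    then show ?thesis
      by (simp add: V.span_base)
  next
    case False
    then show ?thesis
      using col_in_span[OF I(2) False dependent I(1)] that by blast
  qed
  then have "col ` J \<subseteq> V.span (col ` I)"
    by blast
  then have "card (col ` J) \<le> card (col ` I)"
    using V.independent_span_bound[OF _ independent_cols[OF J]] I by simp
  moreover have "card (col ` J) = card J"
    using card_image[OF inj_on_col[OF J]] .
  moreover have "card (col ` I) \<le> card I"
    using card_image_le[OF I(1)] .
  ultimately show False
    using less by simp
qed

end

lemma circuit_matroid_col_circuits: "circuit_matroid (col_circuits m n A) {1..n}"
proof
  fix I J assume "indep (col_circuits m n A) {1..n} I" "indep (col_circuits m n A) {1..n} J"
    and less: "card I < card J"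
  then have "I \<subseteq> {1..n}" "\<not> col_dependent m A I" "J \<subseteq> {1..n}" "\<not> col_dependent m A J"
    unfolding indep_col_circuits_iff by auto
  moreover have "finite I" "finite J"
    using \<open>I \<subseteq> {1..n}\<close> \<open>J \<subseteq> {1..n}\<close> finite_subset by blast+
  ultimately obtain e where "e \<in> J - I" "\<not> col_dependent m A (insert e I)"
    using col_augmentation[of I m A J] less by blast
  then show "\<exists>e\<in>J - I. indep (col_circuits m n A) {1..n} (insert e I)"
    unfolding indep_col_circuits_iff using \<open>I \<subseteq> {1..n}\<close> \<open>J \<subseteq> {1..n}\<close> by blast
qed simp

section \<open>The substitution determined by the fundamental cocircuits\<close>

lemma regular_matroid_circuit_matroid: "regular_matroid n \<C> \<Longrightarrow> circuit_matroid \<C> {1..n}"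
  unfolding regular_matroid_def using circuit_matroid_col_circuits by blast

lemma regular_matroid_circuit_subset: "regular_matroid n \<C> \<Longrightarrow> C \<in> \<C> \<Longrightarrow> C \<subseteq> {1..n}"
  unfolding regular_matroid_def col_circuits_def by blast

lemma bc_monomial_polys_in: "C \<subseteq> V \<Longrightarrow> bc_monomial C \<in> polys_in V"
  unfolding bc_monomial_def by (intro polys_in_prod polys_in_Var) auto

lemma (in circuit_matroid) theta_split:
  assumes "is_basis \<C> E B" "j \<in> B"
  shows "theta \<C> E B a j = Const (a j j) * Var j + (\<Sum>i\<in>fund_coc \<C> E B j - {j}. Const (a j i) * Var i)"
proof -
  have "finite (fund_coc \<C> E B j)"
    using fund_coc_props(1)[OF assms] finite_ground finite_subset unfolding cocircuits_def by blast
  then show ?thesis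
    unfolding theta_def using sum.remove[OF _ fund_coc_props(3)[OF assms]] by blast
qed

lemma theta_eq_subst_var:
  assumes "circuit_matroid \<C> {1..n}" "is_basis \<C> {1..n} {n-r+1..n}" "j \<in> {n-r+1..n}" "a j j \<noteq> 0"
  shows "theta \<C> {1..n} {n-r+1..n} a j = Const (a j j) * (Var j - subst_var n r \<C> a j)"
  using assms circuit_matroid.theta_split[OF assms(1-3)]
  by (simp add: subst_var_def distrib_left mult.assoc[symmetric] flip: Const_mult)

lemma subst_var_retraction:
  assumes "circuit_matroid \<C> {1..n}" "r \<le> n" "is_basis \<C> {1..n} {n-r+1..n}"
  shows "variable_retraction {1..n} {1..n-r} (subst_var n r \<C> a)"
proof
  fix i assume i: "i \<in> {1..n}"
  show "subst_var n r \<C> a i \<in> polys_in {1..n-r}"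
  proof (cases "i \<le> n - r")
    case True
    then show ?thesis
      using i by (simp add: subst_var_def polys_in_Var)
  next
    case False
    then have "fund_coc \<C> {1..n} {n-r+1..n} i - {i} \<subseteq> {1..n-r}"
      using circuit_matroid.fund_coc_props(2)[OF assms(1,3), of i] i by auto
    then show ?thesis
      using False unfolding subst_var_def
      by (auto intro!: polys_in_uminus polys_in_mult polys_in_sum polys_in_Var)
  qed
qed (auto simp: subst_var_def)

lemma subst_var_elimination:
  fixes a :: "nat \<Rightarrow> nat \<Rightarrow> 'k::field"
  assumes M: "circuit_matroid \<C> {1..n}" and "r \<le> n" and B: "is_basis \<C> {1..n} {n-r+1..n}"
    and "admissible \<C> {1..n} {n-r+1..n} a"
  shows "variable_elimination {1..n} {1..n-r} (subst_var n r \<C> a) (theta \<C> {1..n} {n-r+1..n} a ` {n-r+1..n})"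
proof -
  let ?f = "subst_var n r \<C> a"
  interpret variable_retraction "{1..n}" "{1..n-r}" ?f
    using subst_var_retraction[OF M \<open>r \<le> n\<close> B] .
  have unit: "a j j \<noteq> 0" if "j \<in> {n-r+1..n}" for j
    using circuit_matroid.admissible_diagonal[OF M B \<open>admissible _ _ _ a\<close> that] by auto
  have theta: "theta \<C> {1..n} {n-r+1..n} a j = Const (a j j) * (Var j - ?f j)" if "j \<in> {n-r+1..n}" for j
    using M B that unit[OF that] by (rule theta_eq_subst_var)
  have f_in: "?f j \<in> polys_in {1..n}" if "j \<in> {n-r+1..n}" for j
    using maps_into[of j] polys_in_mono[OF subset] that by auto
  show ?thesis
  proof
    show "theta \<C> {1..n} {n-r+1..n} a ` {n-r+1..n} \<subseteq> polys_in {1..n}"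
    proof clarify
      fix j assume j: "j \<in> {n-r+1..n}"
      then show "theta \<C> {1..n} {n-r+1..n} a j \<in> polys_in {1..n}"
        unfolding theta[OF j] using f_in[OF j] by (auto intro!: polys_in_mult polys_in_diff polys_in_Var)
    qed
    show "peval ?f g = 0" if g: "g \<in> theta \<C> {1..n} {n-r+1..n} a ` {n-r+1..n}" for g
    proof -
      obtain j where j: "j \<in> {n-r+1..n}" "g = theta \<C> {1..n} {n-r+1..n} a j"
        using g by blast
      then have "?f j \<in> polys_in {1..n-r}"
        using maps_into by auto
      then show ?thesis
        unfolding j(2) theta[OF j(1)] by (simp add: peval_mult peval_diff peval_fixes)
    qed
    fix j assume "j \<in> {1..n} - {1..n-r}"
    then have j: "j \<in> {n-r+1..n}"
      by auto
    then have "Var j - ?f j = Const (inverse (a j j)) * theta \<C> {1..n} {n-r+1..n} a j"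
      unfolding theta[OF j] using unit[OF j] by (simp add: mult.assoc[symmetric] flip: Const_mult)
    then show "Var j - ?f j \<in> ideal_in (polys_in {1..n}) (theta \<C> {1..n} {n-r+1..n} a ` {n-r+1..n})"
      using j by (simp add: ideal_in_gen)
  qed
qed

theorem proposition4p1:
  fixes \<C> :: "nat set set" and n r :: nat and a :: "nat \<Rightarrow> nat \<Rightarrow> 'k::field"
  assumes "regular_matroid n \<C>"
    and "r \<le> n"
    and "is_basis \<C> {1..n} {n-r+1..n}"
    and "admissible \<C> {1..n} {n-r+1..n} a"
  defines "\<phi> \<equiv> peval (subst_var n r \<C> a)"
    and "\<Theta> \<equiv> theta \<C> {1..n} {n-r+1..n} a ` {n-r+1..n}"
    and "I \<equiv> ideal_in (polys_in {1..n}) (bc_monomial ` \<C>)"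
    and "J \<equiv> ideal_in (polys_in {1..n-r}) ((\<lambda>C. peval (subst_var n r \<C> a) (bc_monomial C)) ` \<C>)"
  shows "\<phi> ` polys_in {1..n} = polys_in {1..n-r}
    \<and> (\<forall>p\<in>polys_in {1..n}. \<phi> p = 0 \<longleftrightarrow> p \<in> ideal_in (polys_in {1..n}) \<Theta>)
    \<and> \<phi> ` ideal_in (polys_in {1..n}) (bc_monomial ` \<C> \<union> \<Theta>) = J
    \<and> (\<forall>p\<in>polys_in {1..n}. \<phi> p \<in> J \<longleftrightarrow> p \<in> ideal_in (polys_in {1..n}) (bc_monomial ` \<C> \<union> \<Theta>))"
proof -
  interpret variable_elimination "{1..n}" "{1..n-r}" "subst_var n r \<C> a" \<Theta>
    unfolding \<Theta>_def
    using subst_var_elimination[OF regular_matroid_circuit_matroid[OF assms(1)] assms(2-4)] .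
  have G: "bc_monomial ` \<C> \<subseteq> polys_in {1..n}"
    using regular_matroid_circuit_subset[OF assms(1)] bc_monomial_polys_in by blast
  have J_eq: "J = ideal_in (polys_in {1..n-r}) (\<phi> ` bc_monomial ` \<C>)"
    by (simp add: J_def \<phi>_def image_image)
  show ?thesis
    unfolding J_eq \<phi>_def
    using peval_image peval_eq_0_iff peval_image_ideal peval_in_ideal_iff[OF G] by blast
qed

end
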